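(* Fix an $(M,n)$ symmetric code with power constraint $P$ for the Gaussian many-access channel with $\ell_n$ users and activity probability $\alpha_n$, and let $k_n=\alpha_n\ell_n$. Let $\mathbf X=(\mathbf X_1^T,\dots,\mathbf X_{\ell_n}^T)^T\in\{0,1\}^{M\ell_n}$, where $\mathbf X_k=\mathbf 0$ if $W_k=0$ and $\mathbf X_k=\mathbf e_m$ (the $m$-th standard basis vector of $\mathbb R^M$) if $W_k=m\in\{1,\dots,M\}$, and let $\mathbf Y$ be the channel output. Then $I(\mathbf X;\mathbf Y)\le\frac n2\log(1+k_nP)$.
   Context: Logarithms are natural. Channel: $\mathbf Y=\sum_{k=1}^{\ell_n}\mathbf s_k(W_k)+\mathbf Z\in\mathbb R^n$, $\mathbf Z$ i.i.d. standard Gaussian independent of messages. An $(M,n)$ symmetric code with power constraint $P$: encoders $\mathbf s_k:\{0,\dots,M\}\to\mathbb R^n$ with $\mathbf s_k(0)=\mathbf 0$ and $\frac1n\sum_{i=1}^ns_{ki}(w)^2\le P$ for all $w$, and a decoder. Messages $W_1,\dots,W_{\ell_n}$ are independent with $\mathsf P\{W_k=0\}=1-\alpha_n$ and $\mathsf P\{W_k=w\}=\alpha_n/M$ for $1\le w\le M$. *)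

theory Defs
  imports "HOL-Probability.Probability"
begin

definition msg_pmf :: "real \<Rightarrow> nat \<Rightarrow> nat pmf" where
  "msg_pmf \<alpha> M = bind_pmf (bernoulli_pmf \<alpha>)
     (\<lambda>b. if b then pmf_of_set {1..M} else return_pmf 0)"

definition mac_space :: "real \<Rightarrow> nat \<Rightarrow> nat \<Rightarrow> nat \<Rightarrow> ((nat \<Rightarrow> nat) \<times> (nat \<Rightarrow> real)) measure" where
  "mac_space \<alpha> M l n =
     (PiM {..<l} (\<lambda>_. measure_pmf (msg_pmf \<alpha> M))) \<Otimes>\<^sub>M
     (PiM {..<n} (\<lambda>_. density lborel std_normal_density))"

text \<open>One-hot vector X in {0,1}^(M l): coordinate k*M + (m-1) (0-based k) is 1 iff W_k = m.\<close>
definition mac_X :: "nat \<Rightarrow> nat \<Rightarrow> (nat \<Rightarrow> nat) \<times> (nat \<Rightarrow> real) \<Rightarrow> nat \<Rightarrow> real" where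
  "mac_X M l \<omega> = (\<lambda>j\<in>{..<l*M}. if fst \<omega> (j div M) = j mod M + 1 then 1 else 0)"

definition mac_Y :: "(nat \<Rightarrow> nat \<Rightarrow> nat \<Rightarrow> real) \<Rightarrow> nat \<Rightarrow> nat \<Rightarrow> (nat \<Rightarrow> nat) \<times> (nat \<Rightarrow> real) \<Rightarrow> nat \<Rightarrow> real" where
  "mac_Y s l n \<omega> = (\<lambda>i\<in>{..<n}. (\<Sum>k<l. s k (fst \<omega> k) i) + snd \<omega> i)"

end

theory Submission
  imports Defs
begin

text \<open>
  The mutual information is the expectation of \<open>ln (\<phi>(Z) / p(Y))\<close>, where \<open>\<phi>\<close> is the standard normal
  density of the noise \<open>Z\<close> and \<open>p\<close> is the density of the output \<open>Y\<close>. For any probability density \<open>q\<close>,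
  \<open>ln t \<le> t - 1\<close> gives \<open>ln (\<phi>(Z) / p(Y)) \<le> ln (\<phi>(Z) / q(Y)) + q(Y) / p(Y) - 1\<close>, and the last two
  terms have mean zero because \<open>q\<close> integrates to one. Take for \<open>q\<close> the normal density with the mean
  of \<open>Y\<close> and variance \<open>\<sigma>\<^sup>2 = 1 + k\<^sub>n P\<close> in every coordinate. Then \<open>ln (\<phi>(Z) / q(Y))\<close> is a quadratic
  in \<open>Z\<close> and the centred superposed codeword \<open>D\<close>, with expectation
  \<open>\<Sum>\<^sub>i ((E D\<^sub>i\<^sup>2 + 1 - \<sigma>\<^sup>2) / (2 \<sigma>\<^sup>2) + ln \<sigma>)\<close>. Since the users are independent, \<open>E D\<^sub>i\<^sup>2\<close> is at most
  the sum of the second moments of the individual codewords, and the power constraint bounds the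
  total over all coordinates by \<open>n \<alpha> \<ell> P = n (\<sigma>\<^sup>2 - 1)\<close>.
\<close>

section \<open>Products of normal densities\<close>

definition gauss_pdf :: "'i set \<Rightarrow> ('i \<Rightarrow> real) \<Rightarrow> real \<Rightarrow> ('i \<Rightarrow> real) \<Rightarrow> real" where
  "gauss_pdf I m \<sigma> y = (\<Prod>i\<in>I. normal_density (m i) \<sigma> (y i))"

lemma gauss_pdf_pos: "0 < \<sigma> \<Longrightarrow> 0 < gauss_pdf I m \<sigma> y"
  unfolding gauss_pdf_def by (intro prod_pos normal_density_pos)

lemma gauss_pdf_restrict[simp]: "gauss_pdf I m \<sigma> (restrict y I) = gauss_pdf I m \<sigma> y"
  unfolding gauss_pdf_def by (intro prod.cong) auto

lemma gauss_pdf_cong: "(\<And>i. i \<in> I \<Longrightarrow> m i = m' i) \<Longrightarrow> gauss_pdf I m \<sigma> = gauss_pdf I m' \<sigma>"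
  unfolding gauss_pdf_def by (intro ext prod.cong) auto

lemma gauss_pdf_shift: "gauss_pdf I m \<sigma> (\<lambda>i. m i + z i) = gauss_pdf I (\<lambda>_. 0) \<sigma> z"
  unfolding gauss_pdf_def normal_density_def by simp

lemma normal_density_le_1: "normal_density m 1 x \<le> 1"
proof -
  have "1 / sqrt (2 * pi) \<le> 1"
    using pi_gt3 by (simp add: divide_le_eq real_le_rsqrt)
  then have "1 / sqrt (2 * pi) * exp (- (x - m)\<^sup>2 / 2) \<le> 1 * 1"
    by (intro mult_mono) auto
  then show ?thesis by (simp add: normal_density_def)
qed

lemma gauss_pdf_le_1: "gauss_pdf I m 1 y \<le> 1"
  unfolding gauss_pdf_def by (intro prod_le_1) (auto simp: normal_density_le_1)

lemma borel_measurable_gauss_pdf[measurable]: "gauss_pdf I m \<sigma> \<in> borel_measurable (PiM I (\<lambda>_. lborel))"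
  unfolding gauss_pdf_def[abs_def] normal_density_def by measurable

lemma PiM_normal_density:
  fixes m :: "'i \<Rightarrow> real"
  assumes I: "finite I" and \<sigma>: "0 < \<sigma>"
  shows "PiM I (\<lambda>i. density lborel (normal_density (m i) \<sigma>)) =
         density (PiM I (\<lambda>_. lborel)) (gauss_pdf I m \<sigma>)"
proof -
  interpret N: product_sigma_finite "\<lambda>i. density lborel (normal_density (m i) \<sigma>)"
    using \<sigma> by (intro product_sigma_finite.intro prob_space_imp_sigma_finite prob_space_normal_density)
  interpret L: product_sigma_finite "\<lambda>_::'i. lborel" by standard
  show ?thesis
  proof (rule N.PiM_eqI[symmetric, OF I])
    fix A assume "\<And>i. i \<in> I \<Longrightarrow> A i \<in> sets (density lborel (normal_density (m i) \<sigma>))"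
    then have A: "\<And>i. i \<in> I \<Longrightarrow> A i \<in> sets lborel" by simp
    have "PiE I A \<in> sets (PiM I (\<lambda>_. lborel))"
      using A by (intro sets_PiM_I_finite I) auto
    then have "emeasure (density (PiM I (\<lambda>_. lborel)) (gauss_pdf I m \<sigma>)) (PiE I A)
       = (\<integral>\<^sup>+ y. ennreal (gauss_pdf I m \<sigma> y) * indicator (PiE I A) y \<partial>PiM I (\<lambda>_. lborel))"
      by (subst emeasure_density) auto
    also have "\<dots> = (\<integral>\<^sup>+ y. (\<Prod>i\<in>I. ennreal (normal_density (m i) \<sigma> (y i)) * indicator (A i) (y i)) \<partial>PiM I (\<lambda>_. lborel))"
    proof (rule nn_integral_cong)
      fix y :: "'i \<Rightarrow> real" assume "y \<in> space (PiM I (\<lambda>_. lborel))"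
      then have "indicator (PiE I A) y = (\<Prod>i\<in>I. indicator (A i) (y i) :: ennreal)"
        using I by (auto simp: space_PiM indicator_def PiE_iff)
      then show "ennreal (gauss_pdf I m \<sigma> y) * indicator (PiE I A) y = (\<Prod>i\<in>I. ennreal (normal_density (m i) \<sigma> (y i)) * indicator (A i) (y i))"
        by (simp add: gauss_pdf_def prod.distrib prod_ennreal)
    qed
    also have "\<dots> = (\<Prod>i\<in>I. \<integral>\<^sup>+ t. ennreal (normal_density (m i) \<sigma> t) * indicator (A i) t \<partial>lborel)"
      using A by (intro L.product_nn_integral_prod I) auto
    also have "\<dots> = (\<Prod>i\<in>I. emeasure (density lborel (normal_density (m i) \<sigma>)) (A i))"
      using A by (intro prod.cong refl) (simp add: emeasure_density)
    finally show "emeasure (density (PiM I (\<lambda>_. lborel)) (gauss_pdf I m \<sigma>)) (PiE I A) = \<dots>" .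
  qed (unfold sets_density, intro sets_PiM_cong, simp_all)
qed

lemma distr_PiM_componentwise:
  fixes I :: "'i set"
  assumes I: "finite I" and M: "\<And>i. prob_space (M i)" and f: "\<And>i. f i \<in> M i \<rightarrow>\<^sub>M N i"
  shows "distr (PiM I M) (PiM I N) (\<lambda>x. \<lambda>i\<in>I. f i (x i)) = PiM I (\<lambda>i. distr (M i) (N i) (f i))"
proof -
  interpret M: product_sigma_finite M
    using M by (simp add: product_sigma_finite_def prob_space_imp_sigma_finite)
  interpret D: product_sigma_finite "\<lambda>i. distr (M i) (N i) (f i)"
    using M f by (simp add: product_sigma_finite_def prob_space_imp_sigma_finite prob_space.prob_space_distr)
  have meas: "(\<lambda>x. \<lambda>i\<in>I. f i (x i)) \<in> PiM I M \<rightarrow>\<^sub>M PiM I N"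
    using f by (intro measurable_restrict measurable_compose[OF measurable_component_singleton]) auto
  show ?thesis
  proof (rule D.PiM_eqI[OF I])
    fix A assume "\<And>i. i \<in> I \<Longrightarrow> A i \<in> sets (distr (M i) (N i) (f i))"
    then have A: "\<And>i. i \<in> I \<Longrightarrow> A i \<in> sets (N i)" by simp
    have "(\<lambda>x. \<lambda>i\<in>I. f i (x i)) -` PiE I A \<inter> space (PiM I M) = PiE I (\<lambda>i. f i -` A i \<inter> space (M i))"
      using f by (auto simp: space_PiM PiE_iff measurable_space)
    moreover have "PiE I A \<in> sets (PiM I N)"
      using A by (intro sets_PiM_I_finite I) auto
    ultimately have "emeasure (distr (PiM I M) (PiM I N) (\<lambda>x. \<lambda>i\<in>I. f i (x i))) (PiE I A)
        = emeasure (PiM I M) (PiE I (\<lambda>i. f i -` A i \<inter> space (M i)))"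
      using meas by (simp add: emeasure_distr)
    also have "\<dots> = (\<Prod>i\<in>I. emeasure (distr (M i) (N i) (f i)) (A i))"
      using A f I by (subst M.emeasure_PiM) (auto intro!: prod.cong simp: emeasure_distr measurable_sets)
    finally show "emeasure (distr (PiM I M) (PiM I N) (\<lambda>x. \<lambda>i\<in>I. f i (x i))) (PiE I A) = \<dots>" .
  qed (unfold sets_distr, intro sets_PiM_cong, simp_all)
qed

lemma distr_std_normal_shift:
  "distr (density lborel std_normal_density) lborel (\<lambda>t. c + t) = density lborel (normal_density c 1)"
proof -
  interpret prob_space "density lborel std_normal_density"
    by (rule prob_space_normal_density) simp
  have "distributed (density lborel std_normal_density) lborel (\<lambda>x. x) std_normal_density"
    by (auto simp: distributed_def distr_id2 intro!: measurable_ident_sets)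
  from normal_density_affine[OF this, of 1 c] show ?thesis
    by (simp add: distributed_def)
qed

lemma distr_PiM_std_normal_shift:
  assumes "finite I"
  shows "distr (PiM I (\<lambda>_. density lborel std_normal_density)) (PiM I (\<lambda>_. lborel)) (\<lambda>z. \<lambda>i\<in>I. m i + z i)
       = density (PiM I (\<lambda>_. lborel)) (gauss_pdf I m 1)"
proof -
  have "distr (PiM I (\<lambda>_. density lborel std_normal_density)) (PiM I (\<lambda>_. lborel)) (\<lambda>z. \<lambda>i\<in>I. m i + z i)
      = PiM I (\<lambda>i. distr (density lborel std_normal_density) lborel (\<lambda>t. m i + t))"
    using assms by (intro distr_PiM_componentwise prob_space_normal_density) auto
  also have "\<dots> = density (PiM I (\<lambda>_. lborel)) (gauss_pdf I m 1)"
    using assms by (simp add: distr_std_normal_shift PiM_normal_density)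
  finally show ?thesis .
qed

lemma nn_integral_PiM_std_normal_shift:
  assumes I: "finite I" and [measurable]: "f \<in> borel_measurable (PiM I (\<lambda>_. lborel))"
  shows "(\<integral>\<^sup>+ z. f (\<lambda>i\<in>I. m i + z i) \<partial>PiM I (\<lambda>_. density lborel std_normal_density))
       = (\<integral>\<^sup>+ y. ennreal (gauss_pdf I m 1 y) * f y \<partial>PiM I (\<lambda>_. lborel))"
proof -
  have "(\<lambda>z. \<lambda>i\<in>I. m i + z i) \<in> PiM I (\<lambda>_. density lborel std_normal_density) \<rightarrow>\<^sub>M PiM I (\<lambda>_. lborel)"
    by (intro measurable_restrict) auto
  then have "(\<integral>\<^sup>+ z. f (\<lambda>i\<in>I. m i + z i) \<partial>PiM I (\<lambda>_. density lborel std_normal_density))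
      = (\<integral>\<^sup>+ y. f y \<partial>distr (PiM I (\<lambda>_. density lborel std_normal_density)) (PiM I (\<lambda>_. lborel)) (\<lambda>z. \<lambda>i\<in>I. m i + z i))"
    by (simp add: nn_integral_distr)
  then show ?thesis
    by (simp add: distr_PiM_std_normal_shift I nn_integral_density)
qed

lemma integral_gauss_pdf:
  assumes I: "finite I" and \<sigma>: "0 < \<sigma>"
  shows "integrable (PiM I (\<lambda>_. lborel)) (gauss_pdf I m \<sigma>)"
    and "(\<integral>y. gauss_pdf I m \<sigma> y \<partial>PiM I (\<lambda>_. lborel)) = 1"
proof -
  interpret prob_space "density (PiM I (\<lambda>_. lborel)) (gauss_pdf I m \<sigma>)"
    unfolding PiM_normal_density[OF assms, symmetric]
    by (intro prob_space_PiM prob_space_normal_density \<sigma>)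
  have nonneg: "\<And>y. 0 \<le> gauss_pdf I m \<sigma> y"
    using gauss_pdf_pos[OF \<sigma>] less_imp_le by blast
  have nn: "(\<integral>\<^sup>+ y. ennreal (gauss_pdf I m \<sigma> y) \<partial>PiM I (\<lambda>_. lborel)) = 1"
    using emeasure_space_1 by (simp add: emeasure_density)
  show int: "integrable (PiM I (\<lambda>_. lborel)) (gauss_pdf I m \<sigma>)"
    using nn nonneg by (intro integrableI_nonneg) auto
  have "ennreal (\<integral>y. gauss_pdf I m \<sigma> y \<partial>PiM I (\<lambda>_. lborel)) = 1"
    using nn nonneg int by (subst nn_integral_eq_integral[symmetric]) auto
  then show "(\<integral>y. gauss_pdf I m \<sigma> y \<partial>PiM I (\<lambda>_. lborel)) = 1"
    using nonneg by simp
qed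

lemma ln_normal_density:
  assumes "0 < \<sigma>"
  shows "ln (normal_density c \<sigma> x) = - ln (sqrt (2 * pi)) - ln \<sigma> - (x - c)\<^sup>2 / (2 * \<sigma>\<^sup>2)"
proof -
  have "sqrt (2 * pi * \<sigma>\<^sup>2) = sqrt (2 * pi) * \<sigma>"
    using assms by (simp add: real_sqrt_mult)
  then show ?thesis
    using assms by (simp add: normal_density_def ln_mult ln_div)
qed

lemma ln_std_normal_density_div:
  assumes "0 < \<sigma>"
  shows "ln (std_normal_density t / normal_density c \<sigma> (m + t)) = ((m - c + t)\<^sup>2 - \<sigma>\<^sup>2 * t\<^sup>2) / (2 * \<sigma>\<^sup>2) + ln \<sigma>"
proof -
  have "ln (std_normal_density t / normal_density c \<sigma> (m + t))
      = ln (std_normal_density t) - ln (normal_density c \<sigma> (m + t))"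
    using normal_density_pos[of 1 0 t] normal_density_pos[OF assms, of c "m + t"] by (simp add: ln_div)
  then show ?thesis
    using assms by (simp add: ln_normal_density[OF assms] ln_normal_density[of 1] field_simps)
qed

lemma ln_gauss_pdf_div:
  assumes I: "finite I" and \<sigma>: "0 < \<sigma>"
  shows "ln (gauss_pdf I (\<lambda>_. 0) 1 z / gauss_pdf I c \<sigma> (\<lambda>i. m i + z i))
       = (\<Sum>i\<in>I. ((m i - c i + z i)\<^sup>2 - \<sigma>\<^sup>2 * (z i)\<^sup>2) / (2 * \<sigma>\<^sup>2) + ln \<sigma>)"
proof -
  have "gauss_pdf I (\<lambda>_. 0) 1 z / gauss_pdf I c \<sigma> (\<lambda>i. m i + z i)
      = (\<Prod>i\<in>I. std_normal_density (z i) / normal_density (c i) \<sigma> (m i + z i))"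
    by (simp add: gauss_pdf_def prod_dividef)
  also have "ln \<dots> = (\<Sum>i\<in>I. ln (std_normal_density (z i) / normal_density (c i) \<sigma> (m i + z i)))"
    using I normal_density_pos[OF \<sigma>] normal_density_pos[of 1 0] by (intro ln_prod) (simp_all add: less_imp_neq[symmetric])
  finally show ?thesis
    using \<sigma> by (simp add: ln_std_normal_density_div)
qed

lemma std_normal_moments:
  "integrable (density lborel std_normal_density) (\<lambda>x. x)"
  "(\<integral>x. x \<partial>density lborel std_normal_density) = 0"
  "integrable (density lborel std_normal_density) (\<lambda>x. x\<^sup>2)"
  "(\<integral>x. x\<^sup>2 \<partial>density lborel std_normal_density) = 1"
proof -
  show "integrable (density lborel std_normal_density) (\<lambda>x. x)"
    using integrable_std_normal_moment[of 1] by (subst integrable_density) auto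
  show "integrable (density lborel std_normal_density) (\<lambda>x. x\<^sup>2)"
    using integrable_std_normal_moment[of 2] by (subst integrable_density) auto
  show "(\<integral>x. x \<partial>density lborel std_normal_density) = 0"
    using integral_std_normal_moment_odd[of 0] by (subst integral_density) auto
  show "(\<integral>x. x\<^sup>2 \<partial>density lborel std_normal_density) = 1"
    using integral_std_normal_moment_even[of 1] by (subst integral_density) auto
qed

section \<open>Second moments on product spaces\<close>

lemma integral_pair_measure_mult:
  fixes f :: "'a \<Rightarrow> real" and g :: "'b \<Rightarrow> real"
  assumes A: "prob_space A" and B: "prob_space B" and f: "integrable A f" and g: "integrable B g"
  shows "integrable (A \<Otimes>\<^sub>M B) (\<lambda>\<omega>. f (fst \<omega>) * g (snd \<omega>))"
    and "(\<integral>\<omega>. f (fst \<omega>) * g (snd \<omega>) \<partial>(A \<Otimes>\<^sub>M B)) = integral\<^sup>L A f * integral\<^sup>L B g"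
proof -
  interpret A: prob_space A by fact
  interpret B: prob_space B by fact
  interpret pair_sigma_finite A B ..
  have [measurable]: "f \<in> borel_measurable A" "g \<in> borel_measurable B"
    using f g by auto
  show int: "integrable (A \<Otimes>\<^sub>M B) (\<lambda>\<omega>. f (fst \<omega>) * g (snd \<omega>))"
  proof (rule Fubini_integrable)
    have "integrable A (\<lambda>x. \<bar>f x\<bar> * (\<integral>y. norm (g y) \<partial>B))"
      using f by (intro integrable_mult_left) auto
    then show "integrable A (\<lambda>x. \<integral>y. norm (f (fst (x, y)) * g (snd (x, y))) \<partial>B)"
      by (simp add: abs_mult)
  qed (use g in simp_all)
  show "(\<integral>\<omega>. f (fst \<omega>) * g (snd \<omega>) \<partial>(A \<Otimes>\<^sub>M B)) = integral\<^sup>L A f * integral\<^sup>L B g"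
    using integral_fst'[OF int] by simp
qed

lemma integral_pair_measure_square_add:
  fixes f :: "'a \<Rightarrow> real" and g :: "'b \<Rightarrow> real"
  assumes A: "prob_space A" and B: "prob_space B"
    and f: "integrable A f" "integrable A (\<lambda>x. (f x)\<^sup>2)"
    and g: "integrable B g" "integrable B (\<lambda>y. (g y)\<^sup>2)" and g0: "integral\<^sup>L B g = 0"
  shows "integrable (A \<Otimes>\<^sub>M B) (\<lambda>\<omega>. (f (fst \<omega>) + g (snd \<omega>))\<^sup>2)"
    and "(\<integral>\<omega>. (f (fst \<omega>) + g (snd \<omega>))\<^sup>2 \<partial>(A \<Otimes>\<^sub>M B)) = (\<integral>x. (f x)\<^sup>2 \<partial>A) + (\<integral>y. (g y)\<^sup>2 \<partial>B)"
proof -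
  have one_A: "integrable A (\<lambda>_. 1::real)" "integral\<^sup>L A (\<lambda>_. 1::real) = 1"
    using A by (simp_all add: prob_space.prob_space prob_space_def finite_measure.integrable_const)
  have one_B: "integrable B (\<lambda>_. 1::real)" "integral\<^sup>L B (\<lambda>_. 1::real) = 1"
    using B by (simp_all add: prob_space.prob_space prob_space_def finite_measure.integrable_const)
  note ff = integral_pair_measure_mult[OF A B f(2) one_B(1)]
  note gg = integral_pair_measure_mult[OF A B one_A(1) g(2)]
  note fg = integral_pair_measure_mult[OF A B f(1) g(1)]
  have sq: "(f (fst \<omega>) + g (snd \<omega>))\<^sup>2
      = (f (fst \<omega>))\<^sup>2 * 1 + 1 * (g (snd \<omega>))\<^sup>2 + 2 * (f (fst \<omega>) * g (snd \<omega>))" for \<omega>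
    by (simp add: power2_sum)
  show "integrable (A \<Otimes>\<^sub>M B) (\<lambda>\<omega>. (f (fst \<omega>) + g (snd \<omega>))\<^sup>2)"
    unfolding sq using ff(1) gg(1) fg(1) by simp
  show "(\<integral>\<omega>. (f (fst \<omega>) + g (snd \<omega>))\<^sup>2 \<partial>(A \<Otimes>\<^sub>M B)) = (\<integral>x. (f x)\<^sup>2 \<partial>A) + (\<integral>y. (g y)\<^sup>2 \<partial>B)"
    unfolding sq using ff gg fg one_A one_B g0 by simp
qed

lemma integral_PiM_component:
  fixes h :: "'a \<Rightarrow> real"
  assumes N: "\<And>i. i \<in> I \<Longrightarrow> prob_space (N i)" and i: "i \<in> I" and h: "integrable (N i) h"
  shows "integrable (PiM I N) (\<lambda>x. h (x i))" and "(\<integral>x. h (x i) \<partial>PiM I N) = integral\<^sup>L (N i) h"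
proof -
  have meas: "(\<lambda>x. x i) \<in> PiM I N \<rightarrow>\<^sub>M N i"
    using i by measurable
  have [measurable]: "h \<in> borel_measurable (N i)"
    using h by auto
  have distr: "distr (PiM I N) (N i) (\<lambda>x. x i) = N i"
    by (rule distr_PiM_component[OF N i])
  show "integrable (PiM I N) (\<lambda>x. h (x i))"
    using integrable_distr_eq[OF meas, of h] h by (simp add: distr)
  show "(\<integral>x. h (x i) \<partial>PiM I N) = integral\<^sup>L (N i) h"
    using integral_distr[OF meas, of h] by (simp add: distr)
qed

lemma integral_PiM_two_components:
  fixes h g :: "'a \<Rightarrow> real" and I :: "'i set"
  assumes N: "\<And>i. prob_space (N i)" and I: "finite I" "i \<in> I" "j \<in> I" "i \<noteq> j"
    and h: "integrable (N i) h" and g: "integrable (N j) g"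
  shows "integrable (PiM I N) (\<lambda>x. h (x i) * g (x j))"
    and "(\<integral>x. h (x i) * g (x j) \<partial>PiM I N) = integral\<^sup>L (N i) h * integral\<^sup>L (N j) g"
proof -
  interpret product_sigma_finite N
    using N by (simp add: product_sigma_finite_def prob_space_imp_sigma_finite)
  define f where "f t = (if t = i then h else if t = j then g else (\<lambda>_. 1))" for t
  have prod_f: "(\<Prod>t\<in>I. F t) = F i * F j" if "\<And>t. t \<in> I \<Longrightarrow> t \<noteq> i \<Longrightarrow> t \<noteq> j \<Longrightarrow> F t = 1"
    for F :: "'i \<Rightarrow> real"
  proof -
    have "(\<Prod>t\<in>I. F t) = (\<Prod>t\<in>{i, j}. F t)"
      using I that by (intro prod.mono_neutral_right) auto
    then show ?thesis using I by simp
  qed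
  have eq: "(\<Prod>t\<in>I. f t (x t)) = h (x i) * g (x j)" for x
    using I by (subst prod_f) (auto simp: f_def)
  have fi: "\<And>t. t \<in> I \<Longrightarrow> integrable (N t) (f t)"
    using h g N by (auto simp: f_def intro: finite_measure.integrable_const prob_space.axioms(1))
  show "integrable (PiM I N) (\<lambda>x. h (x i) * g (x j))"
    using product_integrable_prod[OF I(1) fi] by (simp add: eq)
  have "(\<integral>x. h (x i) * g (x j) \<partial>PiM I N) = (\<Prod>t\<in>I. integral\<^sup>L (N t) (f t))"
    using product_integral_prod[OF I(1) fi] by (simp add: eq)
  also have "\<dots> = integral\<^sup>L (N i) h * integral\<^sup>L (N j) g"
    using I N by (subst prod_f) (auto simp: f_def prob_space.prob_space)
  finally show "(\<integral>x. h (x i) * g (x j) \<partial>PiM I N) = integral\<^sup>L (N i) h * integral\<^sup>L (N j) g" .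
qed

lemma integral_PiM_sum_square:
  fixes f :: "'i \<Rightarrow> 'a \<Rightarrow> real"
  assumes N: "\<And>i. prob_space (N i)" and I: "finite I"
    and f: "\<And>i. i \<in> I \<Longrightarrow> integrable (N i) (f i)" "\<And>i. i \<in> I \<Longrightarrow> integrable (N i) (\<lambda>y. (f i y)\<^sup>2)"
    and centered: "\<And>i. i \<in> I \<Longrightarrow> integral\<^sup>L (N i) (f i) = 0"
  shows "integrable (PiM I N) (\<lambda>x. (\<Sum>i\<in>I. f i (x i))\<^sup>2)"
    and "(\<integral>x. (\<Sum>i\<in>I. f i (x i))\<^sup>2 \<partial>PiM I N) = (\<Sum>i\<in>I. \<integral>y. (f i y)\<^sup>2 \<partial>N i)"
proof -
  have sq: "(\<Sum>i\<in>I. f i (x i))\<^sup>2 = (\<Sum>i\<in>I. \<Sum>j\<in>I. f i (x i) * f j (x j))" for x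
    by (simp add: power2_eq_square sum_product)
  have cross_term: "integrable (PiM I N) (\<lambda>x. f i (x i) * f j (x j)) \<and>
      (\<integral>x. f i (x i) * f j (x j) \<partial>PiM I N) = (if i = j then \<integral>y. (f i y)\<^sup>2 \<partial>N i else 0)"
    if "i \<in> I" "j \<in> I" for i j
  proof (cases "i = j")
    case True
    then show ?thesis
      using integral_PiM_component[where N = N and I = I and h = "\<lambda>y. (f i y)\<^sup>2", OF N that(1) f(2)[OF that(1)]]
      by (simp add: power2_eq_square)
  next
    case False
    then show ?thesis
      using integral_PiM_two_components[OF N I that False f(1)[OF that(1)] f(1)[OF that(2)]] centered that
      by simp
  qed
  show "integrable (PiM I N) (\<lambda>x. (\<Sum>i\<in>I. f i (x i))\<^sup>2)"
    unfolding sq using cross_term by (intro Bochner_Integration.integrable_sum) auto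
  have "(\<integral>x. (\<Sum>i\<in>I. f i (x i))\<^sup>2 \<partial>PiM I N) = (\<Sum>i\<in>I. \<Sum>j\<in>I. \<integral>x. f i (x i) * f j (x j) \<partial>PiM I N)"
    unfolding sq using cross_term
    by (simp add: Bochner_Integration.integral_sum)
  also have "\<dots> = (\<Sum>i\<in>I. \<Sum>j\<in>I. if i = j then \<integral>y. (f i y)\<^sup>2 \<partial>N i else 0)"
    using cross_term by (intro sum.cong) auto
  also have "\<dots> = (\<Sum>i\<in>I. \<integral>y. (f i y)\<^sup>2 \<partial>N i)"
    using I by simp
  finally show "(\<integral>x. (\<Sum>i\<in>I. f i (x i))\<^sup>2 \<partial>PiM I N) = (\<Sum>i\<in>I. \<integral>y. (f i y)\<^sup>2 \<partial>N i)" .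
qed

lemma (in prob_space) integral_centered_square_le:
  fixes f :: "'a \<Rightarrow> real"
  assumes "integrable M f" "integrable M (\<lambda>x. (f x)\<^sup>2)"
  shows "(\<integral>x. (f x - expectation f)\<^sup>2 \<partial>M) \<le> (\<integral>x. (f x)\<^sup>2 \<partial>M)"
  using variance_eq[OF assms] by simp

lemma (in prob_space) mutual_information_cong_sets:
  assumes "sets S = sets S'" "sets T = sets T'"
  shows "mutual_information b S T X Y = mutual_information b S' T' X Y"
proof -
  have "sets (S \<Otimes>\<^sub>M T) = sets (S' \<Otimes>\<^sub>M T')"
    using assms by (rule sets_pair_measure_cong)
  then show ?thesis
    unfolding mutual_information_def using assms by (simp cong: distr_cong)
qed

lemma distributedI_nn_integral:
  assumes X: "X \<in> M \<rightarrow>\<^sub>M N" and f: "f \<in> borel_measurable N"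
    and eq: "\<And>C. C \<in> sets N \<Longrightarrow> (\<integral>\<^sup>+ \<omega>. indicator C (X \<omega>) \<partial>M) = (\<integral>\<^sup>+ y. f y * indicator C y \<partial>N)"
  shows "distributed M N X f"
  unfolding distributed_def
proof (intro conjI measure_eqI)
  fix C assume "C \<in> sets (distr M N X)"
  then have C: "C \<in> sets N" by simp
  have "emeasure (distr M N X) C = (\<integral>\<^sup>+ y. indicator C y \<partial>distr M N X)"
    using C by simp
  also have "\<dots> = (\<integral>\<^sup>+ \<omega>. indicator C (X \<omega>) \<partial>M)"
    using X C by (intro nn_integral_distr) auto
  also have "\<dots> = emeasure (density N f) C"
    using C f by (simp add: eq emeasure_density)
  finally show "emeasure (distr M N X) C = emeasure (density N f) C" .
qed (use X f in simp_all)

section \<open>The channel model\<close>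

abbreviation msg_space :: "real \<Rightarrow> nat \<Rightarrow> nat \<Rightarrow> (nat \<Rightarrow> nat) measure" where
  "msg_space \<alpha> M l \<equiv> PiM {..<l} (\<lambda>_. measure_pmf (msg_pmf \<alpha> M))"

abbreviation noise_space :: "nat \<Rightarrow> (nat \<Rightarrow> real) measure" where
  "noise_space n \<equiv> PiM {..<n} (\<lambda>_. density lborel std_normal_density)"

abbreviation signal_space :: "nat \<Rightarrow> (nat \<Rightarrow> real) measure" where
  "signal_space n \<equiv> PiM {..<n} (\<lambda>_. lborel)"

abbreviation onehot_space :: "nat \<Rightarrow> nat \<Rightarrow> (nat \<Rightarrow> real) measure" where
  "onehot_space M l \<equiv> PiM {..<l*M} (\<lambda>_. count_space UNIV)"

definition codeword_sum :: "(nat \<Rightarrow> nat \<Rightarrow> nat \<Rightarrow> real) \<Rightarrow> nat \<Rightarrow> (nat \<Rightarrow> nat) \<Rightarrow> nat \<Rightarrow> real" where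
  "codeword_sum s l w = (\<lambda>i. \<Sum>k<l. s k (w k) i)"

lemma mac_space_eq: "mac_space \<alpha> M l n = msg_space \<alpha> M l \<Otimes>\<^sub>M noise_space n"
  unfolding mac_space_def ..

lemma mac_Y_eq: "mac_Y s l n \<omega> = (\<lambda>i\<in>{..<n}. codeword_sum s l (fst \<omega>) i + snd \<omega> i)"
  unfolding mac_Y_def codeword_sum_def ..

lemma prob_space_msg_space: "prob_space (msg_space \<alpha> M l)"
  by (intro prob_space_PiM prob_space_measure_pmf)

lemma prob_space_noise_space: "prob_space (noise_space n)"
  by (intro prob_space_PiM prob_space_normal_density) simp

lemma prob_space_mac_space: "prob_space (mac_space \<alpha> M l n)"
  unfolding mac_space_eq by (intro prob_space_pair prob_space_msg_space prob_space_noise_space)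

lemma measurable_codeword_sum[measurable]: "(\<lambda>w. codeword_sum s l w i) \<in> borel_measurable (msg_space \<alpha> M l)"
  unfolding codeword_sum_def by measurable

lemma measurable_mac_Y[measurable]: "mac_Y s l n \<in> msg_space \<alpha> M l \<Otimes>\<^sub>M noise_space n \<rightarrow>\<^sub>M signal_space n"
  unfolding mac_Y_eq[abs_def] by measurable

lemma set_pmf_msg_pmf: "M \<ge> 1 \<Longrightarrow> set_pmf (msg_pmf \<alpha> M) \<subseteq> {..M}"
  unfolding msg_pmf_def by (auto split: if_splits)

lemma integrable_msg_pmf: "M \<ge> 1 \<Longrightarrow> integrable (measure_pmf (msg_pmf \<alpha> M)) (f :: nat \<Rightarrow> real)"
  using set_pmf_msg_pmf by (intro integrable_measure_pmf_finite) (auto intro: finite_subset)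

lemma pmf_msg_pmf:
  assumes "0 \<le> \<alpha>" "\<alpha> \<le> 1" "1 \<le> w" "w \<le> M"
  shows "pmf (msg_pmf \<alpha> M) w = \<alpha> / M"
proof -
  have "pmf (msg_pmf \<alpha> M) w
      = (\<Sum>b\<in>UNIV. pmf (if b then pmf_of_set {1..M} else return_pmf 0) w * pmf (bernoulli_pmf \<alpha>) b)"
    unfolding msg_pmf_def pmf_bind by (rule integral_measure_pmf_real) auto
  then show ?thesis
    using assms by (simp add: UNIV_bool indicator_def)
qed

lemma integral_msg_pmf:
  "M \<ge> 1 \<Longrightarrow> (\<integral>v. f v \<partial>measure_pmf (msg_pmf \<alpha> M)) = (\<Sum>v\<le>M. f v * pmf (msg_pmf \<alpha> M) v)"
  using set_pmf_msg_pmf by (intro integral_measure_pmf_real) auto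

lemma AE_msg_space_le:
  assumes "M \<ge> 1"
  shows "AE w in msg_space \<alpha> M l. \<forall>k<l. w k \<le> M"
proof -
  have "AE w in msg_space \<alpha> M l. \<forall>k\<in>{..<l}. w k \<le> M"
  proof (rule AE_ball_countable')
    fix k assume "k \<in> {..<l}"
    moreover have "AE v in measure_pmf (msg_pmf \<alpha> M). v \<le> M"
      using set_pmf_msg_pmf[OF assms] by (auto simp: AE_measure_pmf_iff)
    ultimately show "AE w in msg_space \<alpha> M l. w k \<le> M"
      by (intro AE_PiM_component) (auto simp: prob_space_measure_pmf)
  qed auto
  then show ?thesis by (rule eventually_mono) auto
qed

definition mean_codeword_sum :: "real \<Rightarrow> nat \<Rightarrow> (nat \<Rightarrow> nat \<Rightarrow> nat \<Rightarrow> real) \<Rightarrow> nat \<Rightarrow> nat \<Rightarrow> real" where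
  "mean_codeword_sum \<alpha> M s l i = (\<Sum>k<l. \<integral>v. s k v i \<partial>measure_pmf (msg_pmf \<alpha> M))"

lemma integral_codeword_sum_centered_square:
  fixes s :: "nat \<Rightarrow> nat \<Rightarrow> nat \<Rightarrow> real" and \<alpha> :: real and l i :: nat
  assumes M: "M \<ge> 1"
  defines "d \<equiv> \<lambda>w. codeword_sum s l w i - mean_codeword_sum \<alpha> M s l i"
  shows "integrable (msg_space \<alpha> M l) d"
    and "integrable (msg_space \<alpha> M l) (\<lambda>w. (d w)\<^sup>2)"
    and "(\<integral>w. (d w)\<^sup>2 \<partial>msg_space \<alpha> M l) \<le> (\<Sum>k<l. \<integral>v. (s k v i)\<^sup>2 \<partial>measure_pmf (msg_pmf \<alpha> M))"
proof -
  let ?p = "measure_pmf (msg_pmf \<alpha> M)"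
  define e where "e k v = s k v i - (\<integral>v. s k v i \<partial>?p)" for k v
  have d_eq: "d w = (\<Sum>k<l. e k (w k))" for w
    by (simp add: d_def e_def codeword_sum_def mean_codeword_sum_def sum_subtractf)
  have int: "integrable ?p f" for f :: "nat \<Rightarrow> real"
    using M by (rule integrable_msg_pmf)
  have centered: "(\<integral>v. e k v \<partial>?p) = 0" for k
    using int by (simp add: e_def measure_pmf.prob_space)
  show "integrable (msg_space \<alpha> M l) d"
    unfolding d_eq[abs_def]
    by (intro Bochner_Integration.integrable_sum integral_PiM_component(1) prob_space_measure_pmf int) auto
  note sum_square = integral_PiM_sum_square[where f = e and I = "{..<l}",
      OF prob_space_measure_pmf finite_lessThan int int centered]
  show "integrable (msg_space \<alpha> M l) (\<lambda>w. (d w)\<^sup>2)"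
    unfolding d_eq using sum_square(1) .
  have "(\<integral>w. (d w)\<^sup>2 \<partial>msg_space \<alpha> M l) = (\<Sum>k<l. \<integral>v. (e k v)\<^sup>2 \<partial>?p)"
    unfolding d_eq using sum_square(2) .
  also have "\<dots> \<le> (\<Sum>k<l. \<integral>v. (s k v i)\<^sup>2 \<partial>?p)"
    unfolding e_def using int by (intro sum_mono measure_pmf.integral_centered_square_le)
  finally show "(\<integral>w. (d w)\<^sup>2 \<partial>msg_space \<alpha> M l) \<le> (\<Sum>k<l. \<integral>v. (s k v i)\<^sup>2 \<partial>?p)" .
qed

lemma second_moment_codewords_le:
  fixes s :: "nat \<Rightarrow> nat \<Rightarrow> nat \<Rightarrow> real"
  assumes M: "M \<ge> 1" and n: "n \<ge> 1" and \<alpha>: "0 \<le> \<alpha>" "\<alpha> \<le> 1"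
    and silent: "\<And>k i. k < l \<Longrightarrow> i < n \<Longrightarrow> s k 0 i = 0"
    and power: "\<And>k w. k < l \<Longrightarrow> w \<le> M \<Longrightarrow> (1 / real n) * (\<Sum>i<n. (s k w i)\<^sup>2) \<le> P"
  shows "(\<Sum>i<n. \<Sum>k<l. \<integral>v. (s k v i)\<^sup>2 \<partial>measure_pmf (msg_pmf \<alpha> M)) \<le> real n * (\<alpha> * real l * P)"
proof -
  let ?p = "msg_pmf \<alpha> M"
  have energy: "(\<Sum>i<n. (s k v i)\<^sup>2) \<le> real n * P" if "k < l" "v \<le> M" for k v
    using power[OF that] n by (simp add: field_simps)
  have "(\<Sum>i<n. \<Sum>k<l. \<integral>v. (s k v i)\<^sup>2 \<partial>measure_pmf ?p) = (\<Sum>k<l. \<Sum>v\<le>M. pmf ?p v * (\<Sum>i<n. (s k v i)\<^sup>2))"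
    by (subst sum.swap) (simp add: integral_msg_pmf[OF M] sum_distrib_left mult.commute sum.swap[of _ "{..<n}"])
  also have "\<dots> = (\<Sum>k<l. \<Sum>v\<in>{1..M}. \<alpha> / M * (\<Sum>i<n. (s k v i)\<^sup>2))"
  proof (rule sum.cong[OF refl])
    fix k assume k: "k \<in> {..<l}"
    have "{..M} = insert 0 {1..M}" by auto
    then show "(\<Sum>v\<le>M. pmf ?p v * (\<Sum>i<n. (s k v i)\<^sup>2)) = (\<Sum>v\<in>{1..M}. \<alpha> / M * (\<Sum>i<n. (s k v i)\<^sup>2))"
      using k silent \<alpha> by (simp add: pmf_msg_pmf)
  qed
  also have "\<dots> \<le> (\<Sum>k<l. \<Sum>v\<in>{1..M}. \<alpha> / M * (real n * P))"
    using energy \<alpha> by (intro sum_mono mult_left_mono) auto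
  also have "\<dots> = real n * (\<alpha> * real l * P)"
    using M by (simp add: field_simps)
  finally show ?thesis .
qed

definition onehot :: "nat \<Rightarrow> nat \<Rightarrow> (nat \<Rightarrow> nat) \<Rightarrow> nat \<Rightarrow> real" where
  "onehot M l w = (\<lambda>j\<in>{..<l*M}. if w (j div M) = j mod M + 1 then 1 else 0)"

lemma mac_X_eq: "mac_X M l \<omega> = onehot M l (fst \<omega>)"
  unfolding mac_X_def onehot_def ..

lemma onehot_in_space: "onehot M l w \<in> space (onehot_space M l)"
  unfolding onehot_def by (simp add: space_PiM)

lemma onehot_index_less:
  fixes k l m M :: nat
  assumes "k < l" "1 \<le> m" "m \<le> M"
  shows "k*M + m - 1 < l*M"
proof -
  obtain r where "m = Suc r" "r < M"
    using assms(2,3) by (cases m) auto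
  then have "k*M + m - 1 < (k + 1) * M"
    by simp
  also have "\<dots> \<le> l*M"
    using assms by (intro mult_right_mono) auto
  finally show ?thesis .
qed

lemma onehot_index:
  assumes "k < l" "1 \<le> m" "m \<le> M"
  shows "onehot M l w (k*M + m - 1) = (if w k = m then 1 else 0)"
proof -
  obtain r where r: "m = r + 1" "r < M"
    using assms(2,3) by (cases m) auto
  then have "k*M + m - 1 = r + k*M"
    by simp
  then have "(k*M + m - 1) div M = k" "(k*M + m - 1) mod M = r"
    using r(2) by simp_all
  then show ?thesis
    using onehot_index_less[OF assms] r(1) by (auto simp: onehot_def)
qed

lemma measurable_onehot[measurable]: "onehot M l \<in> msg_space \<alpha> M l \<rightarrow>\<^sub>M onehot_space M l"
proof -
  have "(\<lambda>w. if w (j div M) = j mod M + 1 then 1 else 0 :: real) \<in> msg_space \<alpha> M l \<rightarrow>\<^sub>M count_space UNIV"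
    if "j < l*M" for j
    using that by (intro measurable_compose[OF measurable_component_singleton]) (auto simp: less_mult_imp_div_less)
  then show ?thesis
    unfolding onehot_def by (intro measurable_restrict) auto
qed

lemma measurable_mac_X[measurable]: "mac_X M l \<in> msg_space \<alpha> M l \<Otimes>\<^sub>M noise_space n \<rightarrow>\<^sub>M onehot_space M l"
  unfolding mac_X_eq[abs_def] by measurable

text \<open>The joint density of \<open>(X, Y)\<close> must be a function of \<open>X\<close>, so the superposed codeword is
  recovered from the one-hot vector.\<close>
definition onehot_codeword_sum :: "(nat \<Rightarrow> nat \<Rightarrow> nat \<Rightarrow> real) \<Rightarrow> nat \<Rightarrow> nat \<Rightarrow> (nat \<Rightarrow> real) \<Rightarrow> nat \<Rightarrow> real" where
  "onehot_codeword_sum s M l x = (\<lambda>i. \<Sum>k<l. \<Sum>m\<in>{1..M}. x (k*M + m - 1) * s k m i)"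

lemma measurable_onehot_codeword_sum[measurable]:
  "(\<lambda>x. onehot_codeword_sum s M l x i) \<in> borel_measurable (onehot_space M l)"
  unfolding onehot_codeword_sum_def
proof (intro borel_measurable_sum borel_measurable_times borel_measurable_const)
  fix k m assume "k \<in> {..<l}" "m \<in> {1..M}"
  then have "k*M + m - 1 \<in> {..<l*M}"
    using onehot_index_less[of k l m M] by simp
  then show "(\<lambda>x. x (k*M + m - 1)) \<in> borel_measurable (onehot_space M l)"
    by (intro measurable_compose[OF measurable_component_singleton]) auto
qed

lemma onehot_codeword_sum_onehot:
  assumes silent: "\<And>k. k < l \<Longrightarrow> s k 0 i = 0" and w: "\<forall>k<l. w k \<le> M"
  shows "onehot_codeword_sum s M l (onehot M l w) i = codeword_sum s l w i"
  unfolding onehot_codeword_sum_def codeword_sum_def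
proof (rule sum.cong[OF refl])
  fix k assume k: "k \<in> {..<l}"
  then have "(\<Sum>m\<in>{1..M}. onehot M l w (k*M + m - 1) * s k m i) = (\<Sum>m\<in>{1..M}. if w k = m then s k m i else 0)"
    using onehot_index[of k l _ M w] by (intro sum.cong refl) simp
  also have "\<dots> = s k (w k) i"
    using k w silent[of k] by (cases "w k = 0") auto
  finally show "(\<Sum>m\<in>{1..M}. onehot M l w (k*M + m - 1) * s k m i) = s k (w k) i" .
qed

section \<open>Densities of the input and the output\<close>

lemma measurable_gauss_pdf_codeword_sum[measurable]:
  "(\<lambda>(w, y). gauss_pdf {..<n} (codeword_sum s l w) 1 y) \<in> borel_measurable (msg_space \<alpha> M l \<Otimes>\<^sub>M signal_space n)"
  "(\<lambda>(y, w). gauss_pdf {..<n} (codeword_sum s l w) 1 y) \<in> borel_measurable (signal_space n \<Otimes>\<^sub>M msg_space \<alpha> M l)"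
  unfolding gauss_pdf_def normal_density_def case_prod_beta by measurable

lemma nn_integral_mac_space:
  assumes [measurable]: "f \<in> borel_measurable (onehot_space M l \<Otimes>\<^sub>M signal_space n)"
  shows "(\<integral>\<^sup>+ \<omega>. f (mac_X M l \<omega>, mac_Y s l n \<omega>) \<partial>mac_space \<alpha> M l n)
       = (\<integral>\<^sup>+ w. \<integral>\<^sup>+ y. ennreal (gauss_pdf {..<n} (codeword_sum s l w) 1 y) * f (onehot M l w, y)
            \<partial>signal_space n \<partial>msg_space \<alpha> M l)"
proof -
  interpret noise: prob_space "noise_space n"
    by (rule prob_space_noise_space)
  have [measurable]: "(\<lambda>y. f (onehot M l w, y)) \<in> borel_measurable (signal_space n)" for w
    using onehot_in_space by measurable
  have "(\<integral>\<^sup>+ \<omega>. f (mac_X M l \<omega>, mac_Y s l n \<omega>) \<partial>mac_space \<alpha> M l n)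
      = (\<integral>\<^sup>+ w. \<integral>\<^sup>+ z. f (mac_X M l (w, z), mac_Y s l n (w, z)) \<partial>noise_space n \<partial>msg_space \<alpha> M l)"
    unfolding mac_space_eq by (rule noise.nn_integral_fst[symmetric]) measurable
  also have "\<dots> = (\<integral>\<^sup>+ w. \<integral>\<^sup>+ y. ennreal (gauss_pdf {..<n} (codeword_sum s l w) 1 y) * f (onehot M l w, y)
      \<partial>signal_space n \<partial>msg_space \<alpha> M l)"
    unfolding mac_X_eq mac_Y_eq fst_conv snd_conv
    by (intro nn_integral_cong nn_integral_PiM_std_normal_shift[where f = "\<lambda>y. f (onehot M l _, y)"]) auto
  finally show ?thesis .
qed

definition output_pdf :: "real \<Rightarrow> nat \<Rightarrow> (nat \<Rightarrow> nat \<Rightarrow> nat \<Rightarrow> real) \<Rightarrow> nat \<Rightarrow> nat \<Rightarrow> (nat \<Rightarrow> real) \<Rightarrow> real" where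
  "output_pdf \<alpha> M s l n y = (\<integral>w. gauss_pdf {..<n} (codeword_sum s l w) 1 y \<partial>msg_space \<alpha> M l)"

lemma integrable_gauss_pdf_codeword_sum:
  "integrable (msg_space \<alpha> M l) (\<lambda>w. gauss_pdf {..<n} (codeword_sum s l w) 1 y)"
proof -
  interpret prob_space "msg_space \<alpha> M l"
    by (rule prob_space_msg_space)
  have "(\<lambda>w. gauss_pdf {..<n} (codeword_sum s l w) 1 y) \<in> borel_measurable (msg_space \<alpha> M l)"
    unfolding gauss_pdf_def normal_density_def by measurable
  then show ?thesis
    by (intro integrable_const_bound[where B = 1]) (auto simp: gauss_pdf_le_1 gauss_pdf_pos less_imp_le)
qed

lemma output_pdf_pos: "0 < output_pdf \<alpha> M s l n y"
proof -
  interpret prob_space "msg_space \<alpha> M l"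
    by (rule prob_space_msg_space)
  have "0 \<le> output_pdf \<alpha> M s l n y"
    unfolding output_pdf_def by (intro Bochner_Integration.integral_nonneg) (simp add: gauss_pdf_pos less_imp_le)
  moreover have "output_pdf \<alpha> M s l n y \<noteq> 0"
  proof
    assume "output_pdf \<alpha> M s l n y = 0"
    then have "AE w in msg_space \<alpha> M l. gauss_pdf {..<n} (codeword_sum s l w) 1 y = 0"
      unfolding output_pdf_def using integrable_gauss_pdf_codeword_sum
      by (subst (asm) integral_nonneg_eq_0_iff_AE) (auto simp: gauss_pdf_pos less_imp_le)
    then have "AE w in msg_space \<alpha> M l. False"
      by (rule eventually_mono) (use gauss_pdf_pos[of 1] in \<open>auto simp: less_le\<close>)
    then show False
      by simp
  qed
  ultimately show ?thesis by simp
qed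

lemma measurable_output_pdf[measurable]: "output_pdf \<alpha> M s l n \<in> borel_measurable (signal_space n)"
proof -
  interpret prob_space "msg_space \<alpha> M l"
    by (rule prob_space_msg_space)
  show ?thesis
    unfolding output_pdf_def[abs_def]
    by (rule borel_measurable_lebesgue_integral) (simp add: case_prod_beta')
qed

lemma distributed_output:
  "distributed (mac_space \<alpha> M l n) (signal_space n) (mac_Y s l n) (\<lambda>y. ennreal (output_pdf \<alpha> M s l n y))"
proof (rule distributedI_nn_integral)
  fix C assume [measurable]: "C \<in> sets (signal_space n)"
  interpret msg: prob_space "msg_space \<alpha> M l"
    by (rule prob_space_msg_space)
  interpret signal: product_sigma_finite "\<lambda>_::nat. lborel"
    by standard
  interpret pair_sigma_finite "msg_space \<alpha> M l" "signal_space n"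
    by (intro pair_sigma_finite.intro msg.sigma_finite_measure_axioms signal.sigma_finite) simp
  have "(\<integral>\<^sup>+ \<omega>. indicator C (mac_Y s l n \<omega>) \<partial>mac_space \<alpha> M l n)
      = (\<integral>\<^sup>+ w. \<integral>\<^sup>+ y. ennreal (gauss_pdf {..<n} (codeword_sum s l w) 1 y) * indicator C y
          \<partial>signal_space n \<partial>msg_space \<alpha> M l)"
    using nn_integral_mac_space[of "\<lambda>(x, y). indicator C y"] by simp
  also have "\<dots> = (\<integral>\<^sup>+ y. \<integral>\<^sup>+ w. ennreal (gauss_pdf {..<n} (codeword_sum s l w) 1 y) * indicator C y
          \<partial>msg_space \<alpha> M l \<partial>signal_space n)"
    by (rule Fubini'[symmetric]) measurable
  also have "\<dots> = (\<integral>\<^sup>+ y. ennreal (output_pdf \<alpha> M s l n y) * indicator C y \<partial>signal_space n)"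
    using integrable_gauss_pdf_codeword_sum
    by (intro nn_integral_cong) (simp add: nn_integral_multc output_pdf_def nn_integral_eq_integral
        gauss_pdf_pos less_imp_le)
  finally show "(\<integral>\<^sup>+ \<omega>. indicator C (mac_Y s l n \<omega>) \<partial>mac_space \<alpha> M l n) = \<dots>" .
qed (simp_all add: mac_space_eq)

text \<open>The law of \<open>X\<close> itself serves as reference measure on the input side, so \<open>X\<close> has density \<open>1\<close>.\<close>
definition input_law :: "real \<Rightarrow> nat \<Rightarrow> nat \<Rightarrow> nat \<Rightarrow> (nat \<Rightarrow> real) measure" where
  "input_law \<alpha> M l n = distr (mac_space \<alpha> M l n) (onehot_space M l) (mac_X M l)"

lemma sets_input_law[measurable_cong]: "sets (input_law \<alpha> M l n) = sets (onehot_space M l)"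
  unfolding input_law_def by simp

lemma distributed_input: "distributed (mac_space \<alpha> M l n) (input_law \<alpha> M l n) (mac_X M l) (\<lambda>_. ennreal 1)"
  unfolding distributed_def
proof (intro conjI)
  show "mac_X M l \<in> mac_space \<alpha> M l n \<rightarrow>\<^sub>M input_law \<alpha> M l n"
    unfolding mac_space_eq by (simp add: measurable_cong_sets[OF refl sets_input_law])
  have "distr (mac_space \<alpha> M l n) (input_law \<alpha> M l n) (mac_X M l) = input_law \<alpha> M l n"
    unfolding input_law_def by (rule distr_cong) simp_all
  then show "distr (mac_space \<alpha> M l n) (input_law \<alpha> M l n) (mac_X M l) = density (input_law \<alpha> M l n) (\<lambda>_. ennreal 1)"
    by (simp add: density_1)
qed simp

definition joint_pdf :: "(nat \<Rightarrow> nat \<Rightarrow> nat \<Rightarrow> real) \<Rightarrow> nat \<Rightarrow> nat \<Rightarrow> nat \<Rightarrow> (nat \<Rightarrow> real) \<times> (nat \<Rightarrow> real) \<Rightarrow> real" where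
  "joint_pdf s M l n p = gauss_pdf {..<n} (onehot_codeword_sum s M l (fst p)) 1 (snd p)"

lemma measurable_joint_pdf[measurable]: "joint_pdf s M l n \<in> borel_measurable (onehot_space M l \<Otimes>\<^sub>M signal_space n)"
  unfolding joint_pdf_def[abs_def] gauss_pdf_def normal_density_def by measurable

lemma joint_pdf_onehot:
  assumes "\<And>k i. k < l \<Longrightarrow> i < n \<Longrightarrow> s k 0 i = 0" and "\<forall>k<l. w k \<le> M"
  shows "joint_pdf s M l n (onehot M l w, y) = gauss_pdf {..<n} (codeword_sum s l w) 1 y"
  unfolding joint_pdf_def using assms by (auto intro!: gauss_pdf_cong[THEN fun_cong] onehot_codeword_sum_onehot)

lemma AE_mac_space_le:
  assumes "M \<ge> 1"
  shows "AE \<omega> in mac_space \<alpha> M l n. \<forall>k<l. fst \<omega> k \<le> M"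
proof -
  interpret noise: prob_space "noise_space n"
    by (rule prob_space_noise_space)
  show ?thesis
    unfolding mac_space_eq
    by (rule AE_distrD[OF measurable_fst], unfold noise.distr_pair_fst) (rule AE_msg_space_le[OF assms])
qed

lemma nn_integral_input_law:
  assumes [measurable]: "g \<in> borel_measurable (onehot_space M l)"
  shows "(\<integral>\<^sup>+ x. g x \<partial>input_law \<alpha> M l n) = (\<integral>\<^sup>+ w. g (onehot M l w) \<partial>msg_space \<alpha> M l)"
proof -
  interpret noise: prob_space "noise_space n"
    by (rule prob_space_noise_space)
  have "(\<integral>\<^sup>+ x. g x \<partial>input_law \<alpha> M l n) = (\<integral>\<^sup>+ \<omega>. g (onehot M l (fst \<omega>)) \<partial>mac_space \<alpha> M l n)"
    unfolding input_law_def mac_space_eq by (subst nn_integral_distr) (simp_all add: mac_X_eq)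
  also have "\<dots> = (\<integral>\<^sup>+ w. g (onehot M l w) \<partial>distr (mac_space \<alpha> M l n) (msg_space \<alpha> M l) fst)"
    unfolding mac_space_eq by (subst nn_integral_distr) simp_all
  finally show ?thesis
    unfolding mac_space_eq noise.distr_pair_fst .
qed

lemma distributed_joint:
  assumes M: "M \<ge> 1" and silent: "\<And>k i. k < l \<Longrightarrow> i < n \<Longrightarrow> s k 0 i = 0"
  shows "distributed (mac_space \<alpha> M l n) (input_law \<alpha> M l n \<Otimes>\<^sub>M signal_space n)
           (\<lambda>\<omega>. (mac_X M l \<omega>, mac_Y s l n \<omega>)) (\<lambda>p. ennreal (joint_pdf s M l n p))"
proof (rule distributedI_nn_integral)
  have sets_eq: "sets (input_law \<alpha> M l n \<Otimes>\<^sub>M signal_space n) = sets (onehot_space M l \<Otimes>\<^sub>M signal_space n)"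
    by (intro sets_pair_measure_cong sets_input_law refl)
  fix C assume "C \<in> sets (input_law \<alpha> M l n \<Otimes>\<^sub>M signal_space n)"
  then have C[measurable]: "C \<in> sets (onehot_space M l \<Otimes>\<^sub>M signal_space n)"
    by (simp add: sets_eq)
  interpret signal: product_sigma_finite "\<lambda>_::nat. lborel"
    by standard
  interpret signal: sigma_finite_measure "signal_space n"
    by (rule signal.sigma_finite) simp
  define H where "H x = (\<integral>\<^sup>+ y. ennreal (joint_pdf s M l n (x, y)) * indicator C (x, y) \<partial>signal_space n)" for x
  have H[measurable]: "H \<in> borel_measurable (onehot_space M l)"
    unfolding H_def
    by (rule signal.borel_measurable_nn_integral_fst[where f = "\<lambda>p. ennreal (joint_pdf s M l n p) * indicator C p", simplified])
      measurable
  have "(\<integral>\<^sup>+ p. ennreal (joint_pdf s M l n p) * indicator C p \<partial>(input_law \<alpha> M l n \<Otimes>\<^sub>M signal_space n))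
      = (\<integral>\<^sup>+ x. H x \<partial>input_law \<alpha> M l n)"
    unfolding H_def by (rule signal.nn_integral_fst[symmetric]) (simp add: measurable_cong_sets[OF sets_eq refl])
  also have "\<dots> = (\<integral>\<^sup>+ w. H (onehot M l w) \<partial>msg_space \<alpha> M l)"
    by (rule nn_integral_input_law) (rule H)
  also have "\<dots> = (\<integral>\<^sup>+ w. \<integral>\<^sup>+ y. ennreal (gauss_pdf {..<n} (codeword_sum s l w) 1 y) * indicator C (onehot M l w, y)
      \<partial>signal_space n \<partial>msg_space \<alpha> M l)"
    using AE_msg_space_le[OF M, where \<alpha> = \<alpha> and l = l]
  proof (intro nn_integral_cong_AE, elim eventually_mono)
    fix w assume "\<forall>k<l. w k \<le> M"
    then show "H (onehot M l w) = (\<integral>\<^sup>+ y. ennreal (gauss_pdf {..<n} (codeword_sum s l w) 1 y) * indicator C (onehot M l w, y) \<partial>signal_space n)"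
      unfolding H_def by (simp add: joint_pdf_onehot[where s = s and l = l and n = n, OF silent])
  qed
  also have "\<dots> = (\<integral>\<^sup>+ \<omega>. indicator C (mac_X M l \<omega>, mac_Y s l n \<omega>) \<partial>mac_space \<alpha> M l n)"
    by (rule nn_integral_mac_space[symmetric]) measurable
  finally show "(\<integral>\<^sup>+ \<omega>. indicator C (mac_X M l \<omega>, mac_Y s l n \<omega>) \<partial>mac_space \<alpha> M l n)
      = (\<integral>\<^sup>+ p. ennreal (joint_pdf s M l n p) * indicator C p \<partial>(input_law \<alpha> M l n \<Otimes>\<^sub>M signal_space n))"
    by (rule sym)
qed (simp_all add: mac_space_eq measurable_cong_sets[OF refl sets_input_law])

lemma AE_joint_pdf_mac:
  assumes M: "M \<ge> 1" and silent: "\<And>k i. k < l \<Longrightarrow> i < n \<Longrightarrow> s k 0 i = 0"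
  shows "AE \<omega> in mac_space \<alpha> M l n. joint_pdf s M l n (mac_X M l \<omega>, mac_Y s l n \<omega>) = gauss_pdf {..<n} (\<lambda>_. 0) 1 (snd \<omega>)"
  using AE_mac_space_le[OF M]
  by (rule eventually_mono)
    (simp add: mac_X_eq mac_Y_eq joint_pdf_onehot[where s = s and l = l and n = n, OF silent] gauss_pdf_shift)

lemma mutual_information_mac:
  assumes M: "M \<ge> 1" and silent: "\<And>k i. k < l \<Longrightarrow> i < n \<Longrightarrow> s k 0 i = 0"
  shows "prob_space.mutual_information (mac_space \<alpha> M l n) (exp 1) (onehot_space M l) (PiM {..<n} (\<lambda>_. borel))
           (mac_X M l) (mac_Y s l n)
       = (\<integral>\<omega>. ln (gauss_pdf {..<n} (\<lambda>_. 0) 1 (snd \<omega>) / output_pdf \<alpha> M s l n (mac_Y s l n \<omega>)) \<partial>mac_space \<alpha> M l n)"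
proof -
  interpret information_space "mac_space \<alpha> M l n" "exp 1"
    using prob_space_mac_space by (simp add: information_space_def information_space_axioms_def)
  interpret signal: product_sigma_finite "\<lambda>_::nat. lborel"
    by standard
  have joint: "distributed (mac_space \<alpha> M l n) (input_law \<alpha> M l n \<Otimes>\<^sub>M signal_space n)
      (\<lambda>\<omega>. (mac_X M l \<omega>, mac_Y s l n \<omega>)) (\<lambda>p. ennreal (joint_pdf s M l n p))"
    by (rule distributed_joint[OF M]) (rule silent)
  have "mutual_information (exp 1) (onehot_space M l) (PiM {..<n} (\<lambda>_. borel)) (mac_X M l) (mac_Y s l n)
      = mutual_information (exp 1) (input_law \<alpha> M l n) (signal_space n) (mac_X M l) (mac_Y s l n)"
    by (rule mutual_information_cong_sets) (simp add: sets_input_law, intro sets_PiM_cong, simp_all)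
  also have "\<dots> = (\<integral>p. joint_pdf s M l n p * log (exp 1) (joint_pdf s M l n p / (1 * output_pdf \<alpha> M s l n (snd p)))
      \<partial>(input_law \<alpha> M l n \<Otimes>\<^sub>M signal_space n))"
  proof (rule mutual_information_distr[OF _ _ distributed_input _ distributed_output _ joint])
    show "sigma_finite_measure (input_law \<alpha> M l n)"
      unfolding input_law_def mac_space_eq
      by (intro prob_space_imp_sigma_finite prob_space.prob_space_distr prob_space_mac_space[unfolded mac_space_eq])
        measurable
    show "sigma_finite_measure (signal_space n)"
      by (rule signal.sigma_finite) simp
  qed (simp_all add: joint_pdf_def gauss_pdf_pos output_pdf_pos less_imp_le)
  also have "\<dots> = (\<integral>\<omega>. log (exp 1) (joint_pdf s M l n (mac_X M l \<omega>, mac_Y s l n \<omega>)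
      / (1 * output_pdf \<alpha> M s l n (mac_Y s l n \<omega>))) \<partial>mac_space \<alpha> M l n)"
  proof -
    have "(\<lambda>p. log (exp 1) (joint_pdf s M l n p / (1 * output_pdf \<alpha> M s l n (snd p))))
        \<in> borel_measurable (input_law \<alpha> M l n \<Otimes>\<^sub>M signal_space n)"
      by measurable
    from distributed_integral[OF joint this] show ?thesis
      by (simp add: gauss_pdf_pos joint_pdf_def less_imp_le)
  qed
  also have "\<dots> = (\<integral>\<omega>. ln (gauss_pdf {..<n} (\<lambda>_. 0) 1 (snd \<omega>) / output_pdf \<alpha> M s l n (mac_Y s l n \<omega>)) \<partial>mac_space \<alpha> M l n)"
  proof (rule integral_cong_AE)
    show "AE \<omega> in mac_space \<alpha> M l n. log (exp 1) (joint_pdf s M l n (mac_X M l \<omega>, mac_Y s l n \<omega>)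
        / (1 * output_pdf \<alpha> M s l n (mac_Y s l n \<omega>)))
      = ln (gauss_pdf {..<n} (\<lambda>_. 0) 1 (snd \<omega>) / output_pdf \<alpha> M s l n (mac_Y s l n \<omega>))"
      using AE_joint_pdf_mac[where s = s and l = l and n = n and \<alpha> = \<alpha>, OF M silent]
    proof (rule eventually_mono)
      fix \<omega> :: "(nat \<Rightarrow> nat) \<times> (nat \<Rightarrow> real)"
      assume "joint_pdf s M l n (mac_X M l \<omega>, mac_Y s l n \<omega>) = gauss_pdf {..<n} (\<lambda>_. 0) 1 (snd \<omega>)"
      then show "log (exp 1) (joint_pdf s M l n (mac_X M l \<omega>, mac_Y s l n \<omega>) / (1 * output_pdf \<alpha> M s l n (mac_Y s l n \<omega>)))
        = ln (gauss_pdf {..<n} (\<lambda>_. 0) 1 (snd \<omega>) / output_pdf \<alpha> M s l n (mac_Y s l n \<omega>))"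
        by (simp add: log_def)
    qed
  qed (unfold mac_space_eq, measurable)
  finally show ?thesis .
qed

section \<open>Comparison with a Gaussian output law\<close>

lemma ln_div_le_ln_div_add:
  fixes a p q :: real
  assumes "0 < a" "0 < p" "0 < q"
  shows "ln (a / p) \<le> ln (a / q) + (q / p - 1)"
proof -
  have "ln (a / p) = ln (a / q) + ln (q / p)"
    using assms by (simp add: ln_div)
  then show ?thesis
    using ln_le_minus_one[of "q / p"] assms by simp
qed

lemma integral_output_pdf_ratio:
  assumes "0 < \<sigma>"
  shows "integrable (mac_space \<alpha> M l n)
           (\<lambda>\<omega>. gauss_pdf {..<n} c \<sigma> (mac_Y s l n \<omega>) / output_pdf \<alpha> M s l n (mac_Y s l n \<omega>))"
    and "(\<integral>\<omega>. gauss_pdf {..<n} c \<sigma> (mac_Y s l n \<omega>) / output_pdf \<alpha> M s l n (mac_Y s l n \<omega>) \<partial>mac_space \<alpha> M l n) = 1"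
proof -
  have nonzero: "output_pdf \<alpha> M s l n y \<noteq> 0" for y
    using output_pdf_pos[of \<alpha> M s l n y] by simp
  have [measurable]: "(\<lambda>y. gauss_pdf {..<n} c \<sigma> y / output_pdf \<alpha> M s l n y) \<in> borel_measurable (signal_space n)"
    by measurable
  show "integrable (mac_space \<alpha> M l n)
      (\<lambda>\<omega>. gauss_pdf {..<n} c \<sigma> (mac_Y s l n \<omega>) / output_pdf \<alpha> M s l n (mac_Y s l n \<omega>))"
    by (subst distributed_integrable[OF distributed_output, symmetric])
      (auto simp: nonzero integral_gauss_pdf assms less_imp_le[OF output_pdf_pos])
  show "(\<integral>\<omega>. gauss_pdf {..<n} c \<sigma> (mac_Y s l n \<omega>) / output_pdf \<alpha> M s l n (mac_Y s l n \<omega>) \<partial>mac_space \<alpha> M l n) = 1"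
    by (subst distributed_integral[OF distributed_output, symmetric])
      (auto simp: nonzero integral_gauss_pdf assms less_imp_le[OF output_pdf_pos])
qed

lemma integral_noise_coordinate:
  assumes "i < n"
  shows "integrable (noise_space n) (\<lambda>z. z i)" and "(\<integral>z. z i \<partial>noise_space n) = 0"
    and "integrable (noise_space n) (\<lambda>z. (z i)\<^sup>2)" and "(\<integral>z. (z i)\<^sup>2 \<partial>noise_space n) = 1"
proof -
  have std: "\<And>i. i \<in> {..<n} \<Longrightarrow> prob_space (density lborel std_normal_density)"
    by (intro prob_space_normal_density) simp
  have i: "i \<in> {..<n}"
    using assms by simp
  show "integrable (noise_space n) (\<lambda>z. z i)" "(\<integral>z. z i \<partial>noise_space n) = 0"
    using integral_PiM_component[where h = "\<lambda>x. x", OF std i std_normal_moments(1)] std_normal_moments(2)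
    by simp_all
  show "integrable (noise_space n) (\<lambda>z. (z i)\<^sup>2)" "(\<integral>z. (z i)\<^sup>2 \<partial>noise_space n) = 1"
    using integral_PiM_component[where h = "\<lambda>x. x\<^sup>2", OF std i std_normal_moments(3)] std_normal_moments(4)
    by simp_all
qed

lemma integral_mac_noise_square:
  assumes "i < n"
  shows "integrable (mac_space \<alpha> M l n) (\<lambda>\<omega>. (snd \<omega> i)\<^sup>2)" and "(\<integral>\<omega>. (snd \<omega> i)\<^sup>2 \<partial>mac_space \<alpha> M l n) = 1"
proof -
  have one: "integrable (msg_space \<alpha> M l) (\<lambda>_. 1::real)" "(\<integral>_. (1::real) \<partial>msg_space \<alpha> M l) = 1"
    using prob_space_msg_space by (simp_all add: prob_space.prob_space prob_space_def finite_measure.integrable_const)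
  note z = integral_noise_coordinate[OF assms]
  show "integrable (mac_space \<alpha> M l n) (\<lambda>\<omega>. (snd \<omega> i)\<^sup>2)" "(\<integral>\<omega>. (snd \<omega> i)\<^sup>2 \<partial>mac_space \<alpha> M l n) = 1"
    using integral_pair_measure_mult[OF prob_space_msg_space prob_space_noise_space one(1) z(3)] z(4) one(2) by (simp_all add: mac_space_eq)
qed

lemma integral_mac_coordinate_square:
  assumes M: "M \<ge> 1" and i: "i < n"
  shows "integrable (mac_space \<alpha> M l n)
           (\<lambda>\<omega>. (codeword_sum s l (fst \<omega>) i - mean_codeword_sum \<alpha> M s l i + snd \<omega> i)\<^sup>2)"
    and "(\<integral>\<omega>. (codeword_sum s l (fst \<omega>) i - mean_codeword_sum \<alpha> M s l i + snd \<omega> i)\<^sup>2 \<partial>mac_space \<alpha> M l n)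
           \<le> (\<Sum>k<l. \<integral>v. (s k v i)\<^sup>2 \<partial>measure_pmf (msg_pmf \<alpha> M)) + 1"
proof -
  note z = integral_noise_coordinate[OF i]
  note d = integral_codeword_sum_centered_square[OF M, where s = s and l = l and i = i and \<alpha> = \<alpha>]
  note sum_square = integral_pair_measure_square_add[OF prob_space_msg_space prob_space_noise_space d(1,2) z(1,3,2)]
  show "integrable (mac_space \<alpha> M l n)
      (\<lambda>\<omega>. (codeword_sum s l (fst \<omega>) i - mean_codeword_sum \<alpha> M s l i + snd \<omega> i)\<^sup>2)"
    using sum_square(1) by (simp add: mac_space_eq)
  show "(\<integral>\<omega>. (codeword_sum s l (fst \<omega>) i - mean_codeword_sum \<alpha> M s l i + snd \<omega> i)\<^sup>2 \<partial>mac_space \<alpha> M l n)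
      \<le> (\<Sum>k<l. \<integral>v. (s k v i)\<^sup>2 \<partial>measure_pmf (msg_pmf \<alpha> M)) + 1"
    using sum_square(2) z(4) d(3) by (simp add: mac_space_eq)
qed

lemma ln_output_pdf_ratio_le:
  assumes \<sigma>: "0 < \<sigma>"
  shows "ln (gauss_pdf {..<n} (\<lambda>_. 0) 1 (snd \<omega>) / output_pdf \<alpha> M s l n (mac_Y s l n \<omega>))
    \<le> (\<Sum>i<n. ((codeword_sum s l (fst \<omega>) i - c i + snd \<omega> i)\<^sup>2 - \<sigma>\<^sup>2 * (snd \<omega> i)\<^sup>2) / (2 * \<sigma>\<^sup>2) + ln \<sigma>)
      + (gauss_pdf {..<n} c \<sigma> (mac_Y s l n \<omega>) / output_pdf \<alpha> M s l n (mac_Y s l n \<omega>) - 1)"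
proof -
  have "ln (gauss_pdf {..<n} (\<lambda>_. 0) 1 (snd \<omega>) / output_pdf \<alpha> M s l n (mac_Y s l n \<omega>))
      \<le> ln (gauss_pdf {..<n} (\<lambda>_. 0) 1 (snd \<omega>) / gauss_pdf {..<n} c \<sigma> (mac_Y s l n \<omega>))
        + (gauss_pdf {..<n} c \<sigma> (mac_Y s l n \<omega>) / output_pdf \<alpha> M s l n (mac_Y s l n \<omega>) - 1)"
    by (intro ln_div_le_ln_div_add gauss_pdf_pos output_pdf_pos \<sigma>) simp
  then show ?thesis
    using ln_gauss_pdf_div[OF finite_lessThan \<sigma>] by (simp add: mac_Y_eq)
qed

lemma integral_mac_quadratic_le:
  fixes s :: "nat \<Rightarrow> nat \<Rightarrow> nat \<Rightarrow> real" and \<alpha> :: real and l :: nat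
  assumes M: "M \<ge> 1" and i: "i < n" and \<sigma>: "0 < \<sigma>"
  defines "h \<equiv> \<lambda>\<omega>. ((codeword_sum s l (fst \<omega>) i - mean_codeword_sum \<alpha> M s l i + snd \<omega> i)\<^sup>2
      - \<sigma>\<^sup>2 * (snd \<omega> i)\<^sup>2) / (2 * \<sigma>\<^sup>2) + ln \<sigma>"
  shows "integrable (mac_space \<alpha> M l n) h"
    and "integral\<^sup>L (mac_space \<alpha> M l n) h
      \<le> ((\<Sum>k<l. \<integral>v. (s k v i)\<^sup>2 \<partial>measure_pmf (msg_pmf \<alpha> M)) + 1 - \<sigma>\<^sup>2) / (2 * \<sigma>\<^sup>2) + ln \<sigma>"
proof -
  interpret prob_space "mac_space \<alpha> M l n"
    by (rule prob_space_mac_space)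
  note square = integral_mac_coordinate_square[where s = s and \<alpha> = \<alpha> and l = l, OF M i]
  note noise = integral_mac_noise_square[where \<alpha> = \<alpha> and l = l and M = M, OF i]
  show "integrable (mac_space \<alpha> M l n) h"
    using square noise by (simp add: h_def)
  have "integral\<^sup>L (mac_space \<alpha> M l n) h
      = ((\<integral>\<omega>. (codeword_sum s l (fst \<omega>) i - mean_codeword_sum \<alpha> M s l i + snd \<omega> i)\<^sup>2 \<partial>mac_space \<alpha> M l n)
          - \<sigma>\<^sup>2) / (2 * \<sigma>\<^sup>2) + ln \<sigma>"
    using square noise by (simp add: h_def prob_space)
  also have "\<dots> \<le> ((\<Sum>k<l. \<integral>v. (s k v i)\<^sup>2 \<partial>measure_pmf (msg_pmf \<alpha> M)) + 1 - \<sigma>\<^sup>2) / (2 * \<sigma>\<^sup>2) + ln \<sigma>"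
    using square(2) \<sigma> by (simp add: divide_right_mono)
  finally show "integral\<^sup>L (mac_space \<alpha> M l n) h \<le> \<dots>" .
qed

lemma integral_mac_log_ratio_le:
  assumes M: "M \<ge> 1" and \<sigma>: "1 \<le> \<sigma>"
    and energy: "(\<Sum>i<n. \<Sum>k<l. \<integral>v. (s k v i)\<^sup>2 \<partial>measure_pmf (msg_pmf \<alpha> M)) \<le> real n * (\<sigma>\<^sup>2 - 1)"
  shows "(\<integral>\<omega>. ln (gauss_pdf {..<n} (\<lambda>_. 0) 1 (snd \<omega>) / output_pdf \<alpha> M s l n (mac_Y s l n \<omega>)) \<partial>mac_space \<alpha> M l n)
         \<le> real n * ln \<sigma>"
proof -
  let ?c = "mean_codeword_sum \<alpha> M s l" and ?S = "mac_space \<alpha> M l n"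
  interpret prob_space ?S
    by (rule prob_space_mac_space)
  define V where "V i = (\<Sum>k<l. \<integral>v. (s k v i)\<^sup>2 \<partial>measure_pmf (msg_pmf \<alpha> M))" for i
  define h where "h i = (\<lambda>\<omega>. ((codeword_sum s l (fst \<omega>) i - ?c i + snd \<omega> i)\<^sup>2 - \<sigma>\<^sup>2 * (snd \<omega> i)\<^sup>2) / (2 * \<sigma>\<^sup>2)
      + ln \<sigma>)" for i
  define R where "R \<omega> = gauss_pdf {..<n} ?c \<sigma> (mac_Y s l n \<omega>) / output_pdf \<alpha> M s l n (mac_Y s l n \<omega>)" for \<omega>
  define G where "G \<omega> = (\<Sum>i<n. h i \<omega>) + (R \<omega> - 1)" for \<omega>
  have \<sigma>0: "0 < \<sigma>"
    using \<sigma> by simp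
  have h_int: "integrable ?S (h i)" and h_le: "integral\<^sup>L ?S (h i) \<le> (V i + 1 - \<sigma>\<^sup>2) / (2 * \<sigma>\<^sup>2) + ln \<sigma>"
    if "i < n" for i
    using integral_mac_quadratic_le[where s = s and \<alpha> = \<alpha> and l = l, OF M that \<sigma>0] by (simp_all add: h_def V_def)
  have R: "integrable ?S R" "integral\<^sup>L ?S R = 1"
    unfolding R_def[abs_def] by (intro integral_output_pdf_ratio \<sigma>0)+
  have sum_int: "integrable ?S (\<lambda>\<omega>. \<Sum>i<n. h i \<omega>)"
    using h_int by (intro Bochner_Integration.integrable_sum) auto
  have G_int: "integrable ?S G"
    unfolding G_def[abs_def] using sum_int R by simp
  have "integral\<^sup>L ?S G = (\<Sum>i<n. integral\<^sup>L ?S (h i))"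
    unfolding G_def[abs_def] using sum_int h_int R by (simp add: prob_space Bochner_Integration.integral_sum)
  also have "\<dots> \<le> (\<Sum>i<n. (V i + 1 - \<sigma>\<^sup>2) / (2 * \<sigma>\<^sup>2) + ln \<sigma>)"
    using h_le by (intro sum_mono) simp
  also have "\<dots> = ((\<Sum>i<n. V i) - real n * (\<sigma>\<^sup>2 - 1)) / (2 * \<sigma>\<^sup>2) + real n * ln \<sigma>"
    by (simp add: sum.distrib sum_divide_distrib[symmetric] sum_subtractf algebra_simps)
  also have "\<dots> \<le> real n * ln \<sigma>"
    using energy \<sigma> by (simp add: V_def divide_nonpos_pos)
  finally have "integral\<^sup>L ?S G \<le> real n * ln \<sigma>" .
  moreover have "0 \<le> real n * ln \<sigma>"
    using \<sigma> by simp
  moreover have "ln (gauss_pdf {..<n} (\<lambda>_. 0) 1 (snd \<omega>) / output_pdf \<alpha> M s l n (mac_Y s l n \<omega>)) \<le> G \<omega>" for \<omega>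
    unfolding G_def h_def R_def using \<sigma>0 by (rule ln_output_pdf_ratio_le)
  ultimately show ?thesis
    using G_int
    by (cases "integrable ?S (\<lambda>\<omega>. ln (gauss_pdf {..<n} (\<lambda>_. 0) 1 (snd \<omega>) / output_pdf \<alpha> M s l n (mac_Y s l n \<omega>)))")
      (auto intro: order_trans[OF integral_mono] simp: not_integrable_integral_eq)
qed

theorem lemma1:
  fixes M n l :: nat and \<alpha> P :: real and s :: "nat \<Rightarrow> nat \<Rightarrow> nat \<Rightarrow> real"
  assumes "M \<ge> 1" and "n \<ge> 1"
    and "0 \<le> \<alpha>" and "\<alpha> \<le> 1" and "0 \<le> P"
    and "\<And>k i. k < l \<Longrightarrow> i < n \<Longrightarrow> s k 0 i = 0"
    and "\<And>k w. k < l \<Longrightarrow> w \<le> M \<Longrightarrow> (1 / real n) * (\<Sum>i<n. (s k w i)\<^sup>2) \<le> P"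
  shows "prob_space.mutual_information (mac_space \<alpha> M l n) (exp 1)
           (PiM {..<l*M} (\<lambda>_. count_space UNIV)) (PiM {..<n} (\<lambda>_. borel))
           (mac_X M l) (mac_Y s l n)
         \<le> real n / 2 * ln (1 + \<alpha> * real l * P)"
proof -
  define \<sigma> where "\<sigma> = sqrt (1 + \<alpha> * real l * P)"
  have K: "0 \<le> \<alpha> * real l * P"
    using assms(3,5) by simp
  then have \<sigma>: "1 \<le> \<sigma>" "\<sigma>\<^sup>2 - 1 = \<alpha> * real l * P"
    by (simp_all add: \<sigma>_def)
  have "prob_space.mutual_information (mac_space \<alpha> M l n) (exp 1)
      (PiM {..<l*M} (\<lambda>_. count_space UNIV)) (PiM {..<n} (\<lambda>_. borel)) (mac_X M l) (mac_Y s l n)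
      = (\<integral>\<omega>. ln (gauss_pdf {..<n} (\<lambda>_. 0) 1 (snd \<omega>) / output_pdf \<alpha> M s l n (mac_Y s l n \<omega>)) \<partial>mac_space \<alpha> M l n)"
    by (rule mutual_information_mac[OF assms(1)]) (rule assms(6))
  also have "\<dots> \<le> real n * ln \<sigma>"
    using second_moment_codewords_le[where s = s and l = l and n = n and P = P and \<alpha> = \<alpha> and M = M,
        OF assms(1-4,6-7)]
    by (intro integral_mac_log_ratio_le[OF assms(1) \<sigma>(1)]) (simp add: \<sigma>(2))
  also have "\<dots> = real n / 2 * ln (1 + \<alpha> * real l * P)"
    using K by (simp add: \<sigma>_def ln_sqrt)
  finally show ?thesis .
qed

end
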